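(* Let $\mathcal{G}$ be a GBS graph of groups, $w=a_0^{k_0}y_1a_1^{k_1}\cdots y_na_n^{k_n}$ a $\mathcal{G}$-factorization, and $\sim_{\mathcal{C}}$ the relation on $\{1,\dots,n\}$ defined by: $i\sim_{\mathcal{C}}j$ iff $y_i=\bar y_j$ and (if $i<j$) $\rho(w_{i,j-1})=0$ and $k_{i,j-1}\in\beta_{y_i}\mathbb{Z}$, resp. (if $j<i$) $\rho(w_{j,i-1})=0$ and $k_{j,i-1}\in\beta_{y_j}\mathbb{Z}$. Define $i\approx j$ iff $i=j$ or there exists $\ell$ with $i\sim_{\mathcal{C}}\ell$ and $\ell\sim_{\mathcal{C}}j$. Then $\approx$ is an equivalence relation on $\{1,\dots,n\}$.
   Context: $\mathcal{G}$ consists of a finite connected graph $Y$ (vertices $V(Y)$, edges $E(Y)$, maps $\iota,\tau:E(Y)\to V(Y)$, fixed-point-free involution $y\mapsto\bar y$ with $\iota(\bar y)=\tau(y)$) and integers $\alpha_y,\beta_y\in\mathbb{Z}\setminus\{0\}$ with $\alpha_y=\beta_{\bar y}$. A $\mathcal{G}$-factorization is a word $a_0^{k_0}y_1a_1^{k_1}\cdots y_na_n^{k_n}$ with $\iota(y_i)=a_{i-1}$, $\tau(y_i)=a_i$, $a_n=a_0$, $k_i\in\mathbb{Z}$. For $0\le i\le j\le n$: $w_{i,j}=a_i^{k_i}y_{i+1}\cdots y_ja_j^{k_j}$ and $k_{i,j}=\sum_{\nu=i}^{j}k_\nu\prod_{\mu=i+1}^{\nu}\alpha_{y_\mu}/\beta_{y_\mu}\in\mathbb{Q}$.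 Fix an orientation $D\subseteq E(Y)$ (one of $y,\bar y$ for each edge); $\rho$ maps words additively to $\mathbb{Z}^D$ with $\rho(a^k)=0$, $\rho(y)=e_y$, $\rho(\bar y)=-e_y$ for $y\in D$. *)

theory Defs
  imports Complex_Main
begin

definition gbs_graph ::
  "'v set \<Rightarrow> 'e set \<Rightarrow> ('e \<Rightarrow> 'v) \<Rightarrow> ('e \<Rightarrow> 'v) \<Rightarrow> ('e \<Rightarrow> 'e)
   \<Rightarrow> ('e \<Rightarrow> int) \<Rightarrow> ('e \<Rightarrow> int) \<Rightarrow> bool" where
  "gbs_graph V E \<iota> \<tau> bar \<alpha> \<beta> \<longleftrightarrow>
     finite V \<and> finite E \<and> V \<noteq> {} \<and>
     (\<forall>y\<in>E. \<iota> y \<in> V \<and> \<tau> y \<in> V) \<and>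
     (\<forall>y\<in>E. bar y \<in> E \<and> bar (bar y) = y \<and> bar y \<noteq> y \<and> \<iota> (bar y) = \<tau> y) \<and>
     (\<forall>u\<in>V. \<forall>v\<in>V. (u, v) \<in> {(\<iota> y, \<tau> y) | y. y \<in> E}\<^sup>*) \<and>
     (\<forall>y\<in>E. \<alpha> y \<noteq> 0 \<and> \<beta> y \<noteq> 0 \<and> \<alpha> y = \<beta> (bar y))"

definition orientation :: "'e set \<Rightarrow> ('e \<Rightarrow> 'e) \<Rightarrow> 'e set \<Rightarrow> bool" where
  "orientation E bar D \<longleftrightarrow> D \<subseteq> E \<and> (\<forall>y\<in>E. (y \<in> D) \<noteq> (bar y \<in> D))"

text \<open>A G-factorization a_0^{k_0} y_1 a_1^{k_1} ... y_n a_n^{k_n}, encoded by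
  a :: nat => 'v (indices 0..n), y :: nat => 'e (indices 1..n), k :: nat => int (indices 0..n).\<close>

definition factorization ::
  "'v set \<Rightarrow> 'e set \<Rightarrow> ('e \<Rightarrow> 'v) \<Rightarrow> ('e \<Rightarrow> 'v) \<Rightarrow> nat \<Rightarrow> (nat \<Rightarrow> 'v) \<Rightarrow> (nat \<Rightarrow> 'e)
   \<Rightarrow> (nat \<Rightarrow> int) \<Rightarrow> bool" where
  "factorization V E \<iota> \<tau> n a y k \<longleftrightarrow>
     (\<forall>i\<in>{0..n}. a i \<in> V) \<and>
     (\<forall>i\<in>{1..n}. y i \<in> E \<and> \<iota> (y i) = a (i - 1) \<and> \<tau> (y i) = a i) \<and>
     a n = a 0"

text \<open>rho of a single edge letter, as an element of Z^D (functions 'e => int supported on D).\<close>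

definition rho_edge :: "('e \<Rightarrow> 'e) \<Rightarrow> 'e set \<Rightarrow> 'e \<Rightarrow> ('e \<Rightarrow> int)" where
  "rho_edge bar D e = (\<lambda>d. if e \<in> D \<and> d = e then 1
                            else if bar e \<in> D \<and> d = bar e then -1 else 0)"

text \<open>rho(w_{i,j}) for w_{i,j} = a_i^{k_i} y_{i+1} ... y_j a_j^{k_j}; rho(a^k) = 0.\<close>

definition rho_w :: "('e \<Rightarrow> 'e) \<Rightarrow> 'e set \<Rightarrow> (nat \<Rightarrow> 'e) \<Rightarrow> nat \<Rightarrow> nat \<Rightarrow> ('e \<Rightarrow> int)" where
  "rho_w bar D y i j = (\<lambda>d. \<Sum>\<mu>\<in>{i+1..j}. rho_edge bar D (y \<mu>) d)"

definition kk :: "('e \<Rightarrow> int) \<Rightarrow> ('e \<Rightarrow> int) \<Rightarrow> (nat \<Rightarrow> 'e) \<Rightarrow> (nat \<Rightarrow> int) \<Rightarrow> nat \<Rightarrow> nat \<Rightarrow> rat" where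
  "kk \<alpha> \<beta> y k i j =
     (\<Sum>\<nu>\<in>{i..j}. of_int (k \<nu>) * (\<Prod>\<mu>\<in>{i+1..\<nu>}. of_int (\<alpha> (y \<mu>)) / of_int (\<beta> (y \<mu>))))"

definition simC ::
  "('e \<Rightarrow> 'e) \<Rightarrow> ('e \<Rightarrow> int) \<Rightarrow> ('e \<Rightarrow> int) \<Rightarrow> 'e set \<Rightarrow> nat \<Rightarrow> (nat \<Rightarrow> 'e) \<Rightarrow> (nat \<Rightarrow> int)
   \<Rightarrow> nat \<Rightarrow> nat \<Rightarrow> bool" where
  "simC bar \<alpha> \<beta> D n y k i j \<longleftrightarrow>
     i \<in> {1..n} \<and> j \<in> {1..n} \<and> y i = bar (y j) \<and>
     (i < j \<longrightarrow> rho_w bar D y i (j - 1) = (\<lambda>_. 0) \<and>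
                 (\<exists>m::int. kk \<alpha> \<beta> y k i (j - 1) = of_int (\<beta> (y i) * m))) \<and>
     (j < i \<longrightarrow> rho_w bar D y j (i - 1) = (\<lambda>_. 0) \<and>
                 (\<exists>m::int. kk \<alpha> \<beta> y k j (i - 1) = of_int (\<beta> (y j) * m)))"

definition approxC ::
  "('e \<Rightarrow> 'e) \<Rightarrow> ('e \<Rightarrow> int) \<Rightarrow> ('e \<Rightarrow> int) \<Rightarrow> 'e set \<Rightarrow> nat \<Rightarrow> (nat \<Rightarrow> 'e) \<Rightarrow> (nat \<Rightarrow> int)
   \<Rightarrow> nat \<Rightarrow> nat \<Rightarrow> bool" where
  "approxC bar \<alpha> \<beta> D n y k i j \<longleftrightarrow>
     i = j \<or> (\<exists>l. simC bar \<alpha> \<beta> D n y k i l \<and> simC bar \<alpha> \<beta> D n y k l j)"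

end

theory Submission
  imports Defs
begin

text \<open>
  Attach to each index i a signature: the letter y_i, the vector rho(w_{0,i-1}), and the coset
  k_{0,i-1} + pi_{i-1} alpha(y_i) Z, where pi_{i-1} is the product of the ratios alpha/beta along
  y_1 ... y_{i-1}. Since these ratio products are a multiplicative function of rho (a subpath with
  trivial rho has ratio product 1), for i < l the relation i ~_C l holds exactly when the signature
  of l is the flip of that of i, where the flip replaces the edge e by its reverse, adds rho(e) and
  keeps the coset. The flip is an involution, so i ~_C l ~_C j forces i and j to have equal
  signatures; hence ~_C composed three times with itself lies in ~_C, and for a symmetric relation
  with this property, equality together with its square is an equivalence.
\<close>

lemma equiv_Id_on_Un_relcomp:
  assumes "R \<subseteq> A \<times> A" "sym R" "R O R O R \<subseteq> R"
  shows "equiv A (Id_on A \<union> R O R)"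
proof (rule equivI)
  show "Id_on A \<union> R O R \<subseteq> A \<times> A"
    using assms(1) by auto
  show "refl_on A (Id_on A \<union> R O R)"
    using assms(1) by (auto simp: refl_on_def)
  show "sym (Id_on A \<union> R O R)"
  proof (rule symI)
    fix i j assume "(i, j) \<in> Id_on A \<union> R O R"
    then show "(j, i) \<in> Id_on A \<union> R O R"
      using symD[OF assms(2)] by blast
  qed
  show "trans (Id_on A \<union> R O R)"
  proof (rule transI)
    fix i j m assume "(i, j) \<in> Id_on A \<union> R O R" "(j, m) \<in> Id_on A \<union> R O R"
    then show "(i, m) \<in> Id_on A \<union> R O R"
      using assms(3) by blast
  qed
qed

definition int_coset :: "'a::ring_1 \<Rightarrow> 'a \<Rightarrow> 'a set" where
  "int_coset x M = {x + M * of_int m | m. True}"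

lemma int_coset_eq_iff:
  "int_coset x M = int_coset x' M \<longleftrightarrow> (\<exists>m. x - x' = M * of_int m)"
proof
  assume "int_coset x M = int_coset x' M"
  moreover have "x \<in> int_coset x M"
    unfolding int_coset_def by (rule CollectI, rule exI[of _ 0]) simp
  ultimately obtain m where "x = x' + M * of_int m"
    unfolding int_coset_def by auto
  then show "\<exists>m. x - x' = M * of_int m" by auto
next
  assume "\<exists>m. x - x' = M * of_int m"
  then obtain m0 where m0: "x = x' + M * of_int m0"
    by (auto simp: algebra_simps)
  show "int_coset x M = int_coset x' M"
    unfolding int_coset_def
  proof (intro set_eqI iffI)
    fix z assume "z \<in> {x + M * of_int m | m. True}"
    then obtain m where "z = x + M * of_int m" by auto
    then have "z = x' + M * of_int (m0 + m)" by (simp add: m0 algebra_simps)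
    then show "z \<in> {x' + M * of_int m | m. True}" by blast
  next
    fix z assume "z \<in> {x' + M * of_int m | m. True}"
    then obtain m where "z = x' + M * of_int m" by auto
    then have "z = x + M * of_int (m - m0)" by (simp add: m0 algebra_simps)
    then show "z \<in> {x + M * of_int m | m. True}" by blast
  qed
qed

lemma rho_w_split:
  assumes "a \<le> b" "b \<le> c"
  shows "rho_w bar D y a c d = rho_w bar D y a b d + rho_w bar D y b c d"
proof -
  have "{a+1..c} = {a+1..b} \<union> {b+1..c}" using assms by auto
  then show ?thesis unfolding rho_w_def by (simp add: sum.union_disjoint)
qed

lemma rho_w_Suc:
  "a \<le> b \<Longrightarrow> rho_w bar D y a (Suc b) d = rho_w bar D y a b d + rho_edge bar D (y (Suc b)) d"
  unfolding rho_w_def by (simp add: add.commute)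

definition edge_ratio :: "('e \<Rightarrow> int) \<Rightarrow> ('e \<Rightarrow> int) \<Rightarrow> 'e \<Rightarrow> rat" where
  "edge_ratio \<alpha> \<beta> e = of_int (\<alpha> e) / of_int (\<beta> e)"

definition path_ratio :: "('e \<Rightarrow> int) \<Rightarrow> ('e \<Rightarrow> int) \<Rightarrow> (nat \<Rightarrow> 'e) \<Rightarrow> nat \<Rightarrow> nat \<Rightarrow> rat" where
  "path_ratio \<alpha> \<beta> y a b = (\<Prod>\<mu>\<in>{a+1..b}. edge_ratio \<alpha> \<beta> (y \<mu>))"

lemma kk_eq_sum_path_ratio:
  "kk \<alpha> \<beta> y k a j = (\<Sum>\<nu>\<in>{a..j}. of_int (k \<nu>) * path_ratio \<alpha> \<beta> y a \<nu>)"
  unfolding kk_def path_ratio_def edge_ratio_def ..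

lemma path_ratio_split:
  assumes "a \<le> b" "b \<le> c"
  shows "path_ratio \<alpha> \<beta> y a c = path_ratio \<alpha> \<beta> y a b * path_ratio \<alpha> \<beta> y b c"
proof -
  have "{a+1..c} = {a+1..b} \<union> {b+1..c}" using assms by auto
  then show ?thesis unfolding path_ratio_def by (simp add: prod.union_disjoint)
qed

lemma path_ratio_Suc:
  "a \<le> b \<Longrightarrow> path_ratio \<alpha> \<beta> y a (Suc b) = path_ratio \<alpha> \<beta> y a b * edge_ratio \<alpha> \<beta> (y (Suc b))"
  unfolding path_ratio_def by simp

lemma kk_split:
  assumes "a \<le> b" "b \<le> j"
  shows "kk \<alpha> \<beta> y k a j
    = kk \<alpha> \<beta> y k a b + path_ratio \<alpha> \<beta> y a (Suc b) * kk \<alpha> \<beta> y k (Suc b) j"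
proof -
  have "{a..j} = {a..b} \<union> {Suc b..j}" using assms by auto
  then have "kk \<alpha> \<beta> y k a j
      = kk \<alpha> \<beta> y k a b + (\<Sum>\<nu>\<in>{Suc b..j}. of_int (k \<nu>) * path_ratio \<alpha> \<beta> y a \<nu>)"
    unfolding kk_eq_sum_path_ratio by (simp add: sum.union_disjoint)
  also have "(\<Sum>\<nu>\<in>{Suc b..j}. of_int (k \<nu>) * path_ratio \<alpha> \<beta> y a \<nu>)
      = (\<Sum>\<nu>\<in>{Suc b..j}. path_ratio \<alpha> \<beta> y a (Suc b) * (of_int (k \<nu>) * path_ratio \<alpha> \<beta> y (Suc b) \<nu>))"
  proof (rule sum.cong)
    fix \<nu> assume "\<nu> \<in> {Suc b..j}"
    then have "path_ratio \<alpha> \<beta> y a \<nu>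
        = path_ratio \<alpha> \<beta> y a (Suc b) * path_ratio \<alpha> \<beta> y (Suc b) \<nu>"
      using assms by (intro path_ratio_split) auto
    then show "of_int (k \<nu>) * path_ratio \<alpha> \<beta> y a \<nu>
        = path_ratio \<alpha> \<beta> y a (Suc b) * (of_int (k \<nu>) * path_ratio \<alpha> \<beta> y (Suc b) \<nu>)"
      by simp
  qed simp
  finally show ?thesis
    unfolding kk_eq_sum_path_ratio[of _ _ _ _ "Suc b"] by (simp add: sum_distrib_left)
qed

locale gbs_factorization =
  fixes V :: "'v set" and E :: "'e set" and \<iota> \<tau> :: "'e \<Rightarrow> 'v" and bar :: "'e \<Rightarrow> 'e"
    and \<alpha> \<beta> :: "'e \<Rightarrow> int" and D :: "'e set"
    and n :: nat and a :: "nat \<Rightarrow> 'v" and y :: "nat \<Rightarrow> 'e" and k :: "nat \<Rightarrow> int"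
  assumes gbs: "gbs_graph V E \<iota> \<tau> bar \<alpha> \<beta>"
    and orient: "orientation E bar D"
    and fact: "factorization V E \<iota> \<tau> n a y k"
begin

lemma bar_in_E: "e \<in> E \<Longrightarrow> bar e \<in> E"
  and bar_bar: "e \<in> E \<Longrightarrow> bar (bar e) = e"
  and bar_neq: "e \<in> E \<Longrightarrow> bar e \<noteq> e"
  and alpha_nonzero: "e \<in> E \<Longrightarrow> \<alpha> e \<noteq> 0"
  and beta_nonzero: "e \<in> E \<Longrightarrow> \<beta> e \<noteq> 0"
  and alpha_bar: "e \<in> E \<Longrightarrow> \<alpha> (bar e) = \<beta> e"
  using gbs unfolding gbs_graph_def by simp_all

lemma D_subset_E: "D \<subseteq> E"
  and bar_in_D_iff: "e \<in> E \<Longrightarrow> bar e \<in> D \<longleftrightarrow> e \<notin> D"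
  using orient unfolding orientation_def by auto

lemma finite_D: "finite D"
  using gbs D_subset_E finite_subset unfolding gbs_graph_def by blast

lemma y_in_E: "\<mu> \<in> {1..n} \<Longrightarrow> y \<mu> \<in> E"
  using fact unfolding factorization_def by auto

lemma rho_edge_bar: "e \<in> E \<Longrightarrow> rho_edge bar D (bar e) d = - rho_edge bar D e d"
  using bar_in_D_iff[of e] bar_bar[of e] unfolding rho_edge_def by auto

lemma edge_ratio_nonzero: "e \<in> E \<Longrightarrow> edge_ratio \<alpha> \<beta> e \<noteq> 0"
  using alpha_nonzero beta_nonzero unfolding edge_ratio_def by simp

lemma edge_ratio_bar: "e \<in> E \<Longrightarrow> edge_ratio \<alpha> \<beta> (bar e) = inverse (edge_ratio \<alpha> \<beta> e)"
  using alpha_bar[of e] alpha_bar[of "bar e"] bar_in_E[of e] bar_bar[of e]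
  unfolding edge_ratio_def by simp

lemma prod_powi_rho_edge:
  assumes "e \<in> E"
  shows "(\<Prod>d\<in>D. edge_ratio \<alpha> \<beta> d powi rho_edge bar D e d) = edge_ratio \<alpha> \<beta> e"
proof (cases "e \<in> D")
  case True
  then have "(\<Prod>d\<in>D. edge_ratio \<alpha> \<beta> d powi rho_edge bar D e d)
      = (\<Prod>d\<in>D. if d = e then edge_ratio \<alpha> \<beta> e else 1)"
    using bar_in_D_iff[OF assms] by (intro prod.cong) (auto simp: rho_edge_def)
  then show ?thesis using True finite_D by simp
next
  case False
  then have bar_e: "bar e \<in> D" using bar_in_D_iff[OF assms] by simp
  have "(\<Prod>d\<in>D. edge_ratio \<alpha> \<beta> d powi rho_edge bar D e d)
      = (\<Prod>d\<in>D. if d = bar e then inverse (edge_ratio \<alpha> \<beta> (bar e)) else 1)"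
    using False bar_e by (intro prod.cong) (auto simp: rho_edge_def power_int_minus)
  then show ?thesis
    using bar_e finite_D edge_ratio_bar[OF assms] by simp
qed

lemma path_ratio_eq_prod_powi_rho_w:
  "j \<le> n \<Longrightarrow> path_ratio \<alpha> \<beta> y i j = (\<Prod>d\<in>D. edge_ratio \<alpha> \<beta> d powi rho_w bar D y i j d)"
proof (induction j)
  case 0
  then show ?case by (simp add: path_ratio_def rho_w_def)
next
  case (Suc j)
  show ?case
  proof (cases "i \<le> j")
    case False
    then show ?thesis by (simp add: path_ratio_def rho_w_def)
  next
    case True
    have y_Suc: "y (Suc j) \<in> E" using Suc.prems y_in_E by simp
    have "(\<Prod>d\<in>D. edge_ratio \<alpha> \<beta> d powi rho_w bar D y i (Suc j) d)
        = (\<Prod>d\<in>D. edge_ratio \<alpha> \<beta> d powi rho_w bar D y i j d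
            * edge_ratio \<alpha> \<beta> d powi rho_edge bar D (y (Suc j)) d)"
      using True D_subset_E edge_ratio_nonzero
      by (intro prod.cong) (auto simp: rho_w_Suc power_int_add)
    also have "\<dots> = path_ratio \<alpha> \<beta> y i j * edge_ratio \<alpha> \<beta> (y (Suc j))"
      using Suc prod_powi_rho_edge[OF y_Suc] by (simp add: prod.distrib)
    finally show ?thesis using True by (simp add: path_ratio_Suc)
  qed
qed

lemma path_ratio_nonzero: "j \<le> n \<Longrightarrow> path_ratio \<alpha> \<beta> y i j \<noteq> 0"
  unfolding path_ratio_def using edge_ratio_nonzero y_in_E by auto

definition coset :: "nat \<Rightarrow> rat set" where
  "coset i =
    int_coset (kk \<alpha> \<beta> y k 0 (i - 1)) (path_ratio \<alpha> \<beta> y 0 (i - 1) * of_int (\<alpha> (y i)))"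

definition signature :: "nat \<Rightarrow> 'e \<times> ('e \<Rightarrow> int) \<times> rat set" where
  "signature i = (y i, rho_w bar D y 0 (i - 1), coset i)"

definition flip :: "'e \<times> ('e \<Rightarrow> int) \<times> rat set \<Rightarrow> 'e \<times> ('e \<Rightarrow> int) \<times> rat set" where
  "flip = (\<lambda>(e, p, C). (bar e, \<lambda>d. p d + rho_edge bar D e d, C))"

lemma flip_flip: "e \<in> E \<Longrightarrow> flip (flip (e, p, C)) = (e, p, C)"
  unfolding flip_def by (simp add: bar_bar rho_edge_bar)

lemma flip_flip_signature: "i \<in> {1..n} \<Longrightarrow> flip (flip (signature i)) = signature i"
  unfolding signature_def using flip_flip y_in_E by simp

lemma rho_w_0_split:
  assumes "1 \<le> i" "i < l"
  shows "rho_w bar D y 0 (l - 1) d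
    = rho_w bar D y 0 (i - 1) d + rho_edge bar D (y i) d + rho_w bar D y i (l - 1) d"
  using assms rho_w_split[of 0 i "l - 1" bar D y d] rho_w_Suc[of 0 "i - 1" bar D y d] by simp

lemma coset_eq_iff:
  assumes "1 \<le> i" "i < l" "l \<le> n"
    and "y l = bar (y i)" and "rho_w bar D y i (l - 1) = (\<lambda>_. 0)"
  shows "coset l = coset i \<longleftrightarrow> (\<exists>m. kk \<alpha> \<beta> y k i (l - 1) = of_int (\<beta> (y i) * m))"
proof -
  have yi: "y i \<in> E" using assms y_in_E by simp
  have prefix_Suc: "path_ratio \<alpha> \<beta> y 0 i
      = path_ratio \<alpha> \<beta> y 0 (i - 1) * edge_ratio \<alpha> \<beta> (y i)"
    using assms path_ratio_Suc[of 0 "i - 1"] by simp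
  define M where "M = path_ratio \<alpha> \<beta> y 0 i * of_int (\<beta> (y i))"
  have modulus_i: "path_ratio \<alpha> \<beta> y 0 (i - 1) * of_int (\<alpha> (y i)) = M"
    unfolding M_def prefix_Suc edge_ratio_def using beta_nonzero[OF yi] by simp
  have "path_ratio \<alpha> \<beta> y i (l - 1) = 1"
    using assms path_ratio_eq_prod_powi_rho_w[of "l - 1" i] by simp
  then have "path_ratio \<alpha> \<beta> y 0 (l - 1) = path_ratio \<alpha> \<beta> y 0 i"
    using assms path_ratio_split[of 0 i "l - 1" \<alpha> \<beta> y] by simp
  then have modulus_l: "path_ratio \<alpha> \<beta> y 0 (l - 1) * of_int (\<alpha> (y l)) = M"
    unfolding M_def using assms alpha_bar[OF yi] by simp
  have kk_diff: "kk \<alpha> \<beta> y k 0 (l - 1) - kk \<alpha> \<beta> y k 0 (i - 1)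
      = path_ratio \<alpha> \<beta> y 0 i * kk \<alpha> \<beta> y k i (l - 1)"
    using assms kk_split[of 0 "i - 1" "l - 1" \<alpha> \<beta> y k] by simp
  have "path_ratio \<alpha> \<beta> y 0 i \<noteq> 0" using assms path_ratio_nonzero by simp
  then have "path_ratio \<alpha> \<beta> y 0 i * kk \<alpha> \<beta> y k i (l - 1) = M * of_int m
      \<longleftrightarrow> kk \<alpha> \<beta> y k i (l - 1) = of_int (\<beta> (y i) * m)" for m
    unfolding M_def by (simp add: mult.assoc)
  then show ?thesis
    unfolding coset_def modulus_i modulus_l int_coset_eq_iff kk_diff by simp
qed

lemma simC_iff_flip_signature_less:
  assumes "1 \<le> i" "i < l" "l \<le> n"
  shows "simC bar \<alpha> \<beta> D n y k i l \<longleftrightarrow> signature l = flip (signature i)"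
proof -
  have "y i = bar (y l) \<longleftrightarrow> y l = bar (y i)"
    using assms y_in_E bar_bar by force
  moreover have "rho_w bar D y i (l - 1) = (\<lambda>_. 0)
      \<longleftrightarrow> rho_w bar D y 0 (l - 1) = (\<lambda>d. rho_w bar D y 0 (i - 1) d + rho_edge bar D (y i) d)"
    using rho_w_0_split[OF assms(1,2)] by (auto simp: fun_eq_iff)
  ultimately show ?thesis
    using assms coset_eq_iff unfolding simC_def signature_def flip_def by auto
qed

lemma simC_sym: "simC bar \<alpha> \<beta> D n y k i l \<Longrightarrow> simC bar \<alpha> \<beta> D n y k l i"
  unfolding simC_def using y_in_E bar_bar by force

lemma simC_iff_flip_signature:
  assumes "i \<in> {1..n}" "l \<in> {1..n}"
  shows "simC bar \<alpha> \<beta> D n y k i l \<longleftrightarrow> signature l = flip (signature i)"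
proof (cases i l rule: linorder_cases)
  case less
  then show ?thesis using assms simC_iff_flip_signature_less by simp
next
  case equal
  have "y i \<noteq> bar (y i)" using assms y_in_E bar_neq by metis
  then show ?thesis
    unfolding equal simC_def signature_def flip_def by auto
next
  case greater
  then have "simC bar \<alpha> \<beta> D n y k i l \<longleftrightarrow> signature i = flip (signature l)"
    using assms simC_sym simC_iff_flip_signature_less by (metis atLeastAtMost_iff)
  then show ?thesis
    using assms flip_flip_signature by metis
qed

lemma simC_trans3:
  assumes "simC bar \<alpha> \<beta> D n y k i l" "simC bar \<alpha> \<beta> D n y k l j" "simC bar \<alpha> \<beta> D n y k j m"
  shows "simC bar \<alpha> \<beta> D n y k i m"
proof -
  have range: "i \<in> {1..n}" "l \<in> {1..n}" "j \<in> {1..n}" "m \<in> {1..n}"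
    using assms unfolding simC_def by auto
  have "signature j = signature i"
    using assms(1,2) range flip_flip_signature simC_iff_flip_signature by metis
  then show ?thesis
    using assms(3) range simC_iff_flip_signature by metis
qed

end

theorem lemma3p5:
  fixes V :: "'v set" and E :: "'e set"
  assumes "gbs_graph V E \<iota> \<tau> bar \<alpha> \<beta>"
    and "orientation E bar D"
    and "factorization V E \<iota> \<tau> n a y k"
  shows "equiv {1..n} {(i, j). i \<in> {1..n} \<and> j \<in> {1..n} \<and> approxC bar \<alpha> \<beta> D n y k i j}"
proof -
  interpret gbs_factorization V E \<iota> \<tau> bar \<alpha> \<beta> D n a y k
    using assms by unfold_locales
  define R where "R = {(i, j). simC bar \<alpha> \<beta> D n y k i j}"
  have "R \<subseteq> {1..n} \<times> {1..n}"
    unfolding R_def simC_def by auto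
  moreover have "sym R"
    unfolding R_def by (auto intro: symI simC_sym)
  moreover have "R O R O R \<subseteq> R"
    unfolding R_def by (auto intro: simC_trans3)
  ultimately have "equiv {1..n} (Id_on {1..n} \<union> R O R)"
    by (rule equiv_Id_on_Un_relcomp)
  moreover have "Id_on {1..n} \<union> R O R
      = {(i, j). i \<in> {1..n} \<and> j \<in> {1..n} \<and> approxC bar \<alpha> \<beta> D n y k i j}"
    unfolding R_def approxC_def simC_def by auto
  ultimately show ?thesis by simp
qed

end
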